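(* Let $\alpha\in(0,\pi/2)$ and $F(\beta)=f_1(\alpha,\beta,r_0(\alpha,\beta))$ for $\beta\in[0,\alpha]$. Then $\frac{d}{d\beta}F(\beta)=0$ for some $0\le\beta\le\alpha$ if and only if $\alpha\in[\pi/6,\pi/3]$ and $$\beta=\tfrac12\arccos\!\left(\frac{-2\cos(4\alpha)+\cos(6\alpha)+2}{3-2\cos(4\alpha)}\right).$$
   Context: $f_1(\alpha,\beta,r)=\frac{2\sin\alpha}{\cos\beta(\tan\alpha+\tan\beta)}\cdot\frac{1+\frac{2\tan\beta}{\tan\alpha+\tan\beta}r}{\sqrt{1+r^2+2\cos(2\alpha)r}}$; with $A=\frac{2\tan\beta}{\tan\alpha+\tan\beta}$ and $B=2\cos(2\alpha)$, $r_0(\alpha,\beta)=\frac{2A-B}{2-AB}$. *)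

theory Defs
  imports "HOL-Analysis.Analysis"
begin

definition f1 :: "real \<Rightarrow> real \<Rightarrow> real \<Rightarrow> real" where
  "f1 \<alpha> \<beta> r =
     (2 * sin \<alpha> / (cos \<beta> * (tan \<alpha> + tan \<beta>))) *
     ((1 + (2 * tan \<beta> / (tan \<alpha> + tan \<beta>)) * r) /
      sqrt (1 + r^2 + 2 * cos (2 * \<alpha>) * r))"

definition coefA :: "real \<Rightarrow> real \<Rightarrow> real" where
  "coefA \<alpha> \<beta> = 2 * tan \<beta> / (tan \<alpha> + tan \<beta>)"

definition coefB :: "real \<Rightarrow> real" where
  "coefB \<alpha> = 2 * cos (2 * \<alpha>)"

definition r0 :: "real \<Rightarrow> real \<Rightarrow> real" where
  "r0 \<alpha> \<beta> = (2 * coefA \<alpha> \<beta> - coefB \<alpha>) / (2 - coefA \<alpha> \<beta> * coefB \<alpha>)"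

definition Fbeta :: "real \<Rightarrow> real \<Rightarrow> real" where
  "Fbeta \<alpha> \<beta> = f1 \<alpha> \<beta> (r0 \<alpha> \<beta>)"

end

theory Submission
  imports Defs
begin

(* Write S = sin (2 alpha), C = cos (2 alpha) and k = cot (alpha + beta).  At r = r0 the second
   factor of f1 collapses to sqrt ((A - C)^2 + S^2) / S with A - C = 1 - S k, and the first factor
   is S / sin (alpha + beta) = S sqrt (1 + k^2); so F(beta) = sqrt ((1 + k^2) ((1 - S k)^2 + S^2)).
   Differentiating in k, with m = S k, the derivative is a nonzero multiple of
   (2 m - 1) (m^2 - m + S^2).  As beta runs through [0, alpha], m decreases from 1 + C to C, and
   on that range the quadratic factor is positive.  Hence F'(beta) = 0 iff m = 1/2, which some
   beta attains iff -1/2 <= C <= 1/2, i.e. pi/6 <= alpha <= pi/3; solving S cot (alpha + beta) = 1/2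
   for cos (2 beta) gives the arccos formula. *)

lemma f1_factor_at_r0:
  fixes A C S :: real
  assumes S: "S > 0" and CS: "C^2 + S^2 = 1" and AC: "A * C < 1"
  defines "r \<equiv> (2*A - 2*C) / (2 - A * (2*C))"
  shows "(1 + A * r) / sqrt (1 + r^2 + 2*C*r) = sqrt ((A - C)^2 + S^2) / S"
proof -
  define D where "D = 2 - A * (2*C)"
  define W where "W = (A - C)^2 + S^2"
  have D: "D > 0" using AC unfolding D_def by simp
  have W: "W > 0" using S unfolding W_def by (simp add: add_nonneg_pos)
  have num: "1 + A * r = 2 * W / D"
    using D CS unfolding r_def W_def D_def[symmetric]
    by (simp add: field_simps) (simp add: D_def algebra_simps power2_eq_square)
  have "1 + r^2 + 2*C*r = (D^2 + (2*A - 2*C)^2 + 2*C*(2*A - 2*C)*D) / D^2"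
    using D unfolding r_def D_def[symmetric] by (simp add: field_simps power2_eq_square)
  also have "D^2 + (2*A - 2*C)^2 + 2*C*(2*A - 2*C)*D = (2*S)^2 * W"
    using CS unfolding W_def D_def by algebra
  finally have "sqrt (1 + r^2 + 2*C*r) = 2 * S * sqrt W / D"
    using D S by (simp add: real_sqrt_divide real_sqrt_mult)
  then show ?thesis
    unfolding num W_def[symmetric] using D S W by (simp add: field_simps)
qed

lemma isCont_eventually_gt:
  fixes f :: "'a::t2_space \<Rightarrow> 'b::linorder_topology"
  assumes "isCont f x" "c < f x"
  shows "eventually (\<lambda>y. c < f y) (nhds x)"
  using order_tendstoD(1)[OF isContD[OF assms(1), unfolded tendsto_at_iff_tendsto_nhds] assms(2)] .

lemma isCont_eventually_less:
  fixes f :: "'a::t2_space \<Rightarrow> 'b::linorder_topology"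
  assumes "isCont f x" "f x < c"
  shows "eventually (\<lambda>y. f y < c) (nhds x)"
  using order_tendstoD(2)[OF isContD[OF assms(1), unfolded tendsto_at_iff_tendsto_nhds] assms(2)] .

lemma quadratic_pos_between:
  fixes m C S :: real
  assumes CS: "C^2 + S^2 = 1" and S: "S > 0" and m: "C \<le> m" "m \<le> 1 + C"
  shows "m^2 - m + S^2 > 0"
proof -
  have "C^2 < 1" using CS zero_less_power[OF S, of 2] by linarith
  then have C: "-1 < C" "C < 1" by (simp_all add: abs_square_less_1 abs_less_iff)
  consider "1/2 \<le> C" | "C \<le> -1/2" | "-1/2 < C" "C < 1/2" by linarith
  then show ?thesis
  proof cases
    case 1
    have "(m - C) * (m + C - 1) \<ge> 0" using 1 m by (intro mult_nonneg_nonneg) auto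
    then show ?thesis using CS C by (simp add: power2_eq_square algebra_simps)
  next
    case 2
    have "(1 + C - m) * (- m - C) \<ge> 0" using 2 m by (intro mult_nonneg_nonneg) auto
    then show ?thesis using CS C by (simp add: power2_eq_square algebra_simps)
  next
    case 3
    have "(1/2 - C) * (1/2 + C) > 0" using 3 by (intro mult_pos_pos) auto
    then have "C^2 < 1/4" by (simp add: power2_eq_square algebra_simps)
    moreover have "(m - 1/2)^2 \<ge> 0" by simp
    ultimately show ?thesis using CS by (simp add: power2_eq_square algebra_simps)
  qed
qed

lemma coefA_eq:
  assumes "cos a \<noteq> 0" "cos x \<noteq> 0"
  shows "coefA a x = 2 * cos a * sin x / sin (a + x)"
  using assms by (simp add: coefA_def add_tan_eq) (simp add: tan_def field_simps)

lemma sin_double_mult_cot: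
  fixes a x :: real
  assumes "sin (a + x) \<noteq> 0"
  shows "sin (2*a) * cot (a + x) = cos (2*a) + sin (a - x) / sin (a + x)"
proof -
  have "sin (a - x) = sin (2*a) * cos (a + x) - cos (2*a) * sin (a + x)"
    using sin_diff[of "2*a" "a + x"] by simp
  then show ?thesis using assms by (simp add: cot_def field_simps)
qed

lemma coefA_eq_cot:
  assumes "cos a \<noteq> 0" "cos x \<noteq> 0" "sin (a + x) \<noteq> 0"
  shows "coefA a x = 1 + cos (2*a) - sin (2*a) * cot (a + x)"
proof -
  have "2 * cos a * sin x = sin (a + x) - sin (a - x)"
    by (simp add: sin_add sin_diff)
  then show ?thesis
    using assms by (simp add: coefA_eq sin_double_mult_cot diff_divide_distrib)
qed

lemma sin_double_cot_bounds:
  fixes a x :: real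
  assumes "0 < a" "a < pi/2" "0 \<le> x" "x \<le> a"
  shows "cos (2*a) \<le> sin (2*a) * cot (a + x)" and "sin (2*a) * cot (a + x) \<le> 1 + cos (2*a)"
proof -
  have pos: "sin (a + x) > 0" "cos a > 0" "cos x > 0"
    using assms by (auto intro: sin_gt_zero cos_gt_zero_pi)
  have nonneg: "sin (a - x) \<ge> 0" "sin x \<ge> 0"
    using assms by (auto intro: sin_ge_zero)
  have "sin (a - x) / sin (a + x) \<ge> 0"
    using pos nonneg by simp
  then show "cos (2*a) \<le> sin (2*a) * cot (a + x)"
    using sin_double_mult_cot[of a x] pos by linarith
  have "2 * cos a * sin x / sin (a + x) \<ge> 0"
    using pos nonneg by simp
  then show "sin (2*a) * cot (a + x) \<le> 1 + cos (2*a)"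
    using coefA_eq[of a x] coefA_eq_cot[of a x] pos by linarith
qed

lemma coefA_mult_cos_double_less_1:
  fixes a x :: real
  assumes "0 < a" "a < pi/2" "0 \<le> x" "x \<le> a"
  shows "coefA a x * cos (2*a) < 1"
proof -
  have "cos a > 0" "cos x > 0" "sin (a + x) > 0"
    using assms by (auto intro: sin_gt_zero cos_gt_zero_pi)
  then have "coefA a x = 1 + cos (2*a) - sin (2*a) * cot (a + x)"
    by (simp add: coefA_eq_cot)
  then have A: "0 \<le> coefA a x" "coefA a x \<le> 1"
    using sin_double_cot_bounds[OF assms] by linarith+
  have C: "cos (2*a) < 1"
    using assms cos_monotone_0_pi[of 0 "2*a"] by simp
  show ?thesis
  proof (cases "cos (2*a) \<le> 0")
    case True
    then show ?thesis using A mult_nonneg_nonpos[of "coefA a x"] by fastforce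
  next
    case False
    then have "coefA a x * cos (2*a) \<le> cos (2*a)"
      using A by (intro mult_left_le_one_le) auto
    with C show ?thesis by linarith
  qed
qed

definition Fcot :: "real \<Rightarrow> real \<Rightarrow> real" where
  "Fcot a k = sqrt ((1 + k^2) * ((1 - sin (2*a) * k)^2 + sin (2*a)^2))"

lemma Fcot_pos: "sin (2*a) \<noteq> 0 \<Longrightarrow> Fcot a k > 0"
  unfolding Fcot_def by (intro real_sqrt_gt_zero mult_pos_pos) (auto intro: add_nonneg_pos add_pos_nonneg)

lemma Fbeta_eq_Fcot:
  fixes a x :: real
  assumes a: "0 < a" "a < pi/2" and x: "cos x > 0" "sin (a + x) > 0"
    and AC: "coefA a x * cos (2*a) < 1"
  shows "Fbeta a x = Fcot a (cot (a + x))"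
proof -
  define S where "S = sin (2*a)"
  define k where "k = cot (a + x)"
  have ca: "cos a > 0" "sin a > 0" using a by (auto intro!: cos_gt_zero sin_gt_zero)
  then have S: "S > 0" unfolding S_def by (simp add: sin_double)
  have A: "coefA a x - cos (2*a) = 1 - S * k"
    using ca x unfolding S_def k_def by (simp add: coefA_eq_cot)
  have prefactor: "2 * sin a / (cos x * (tan a + tan x)) = S / sin (a + x)"
    using ca x unfolding S_def sin_double by (simp add: add_tan_eq field_simps)
  have "sqrt (1 + k^2) = 1 / sin (a + x)"
    using x sin_cos_squared_add[of "a + x"]
    unfolding k_def by (simp add: cot_def field_simps real_sqrt_divide)
  then have "Fcot a k = sqrt ((1 - S * k)^2 + S^2) / sin (a + x)"
    unfolding Fcot_def S_def[symmetric] by (simp add: real_sqrt_mult)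
  also have "\<dots> = S / sin (a + x) * (sqrt ((coefA a x - cos (2*a))^2 + S^2) / S)"
    using S unfolding A by simp
  also have "\<dots> = Fbeta a x"
    using f1_factor_at_r0[OF S _ AC] prefactor
    by (simp add: Fbeta_def f1_def r0_def coefB_def S_def coefA_def[symmetric])
  finally show ?thesis unfolding k_def ..
qed

lemma Fcot_has_real_derivative:
  fixes a k :: real
  assumes S: "sin (2*a) \<noteq> 0"
  defines "m \<equiv> sin (2*a) * k"
  shows "(Fcot a has_real_derivative
           (2*m - 1) * (m^2 - m + sin (2*a)^2) / (sin (2*a) * Fcot a k)) (at k)"
proof -
  define S where "S = sin (2*a)"
  define G where "G = (1 + k^2) * ((1 - S * k)^2 + S^2)"
  have G: "G > 0"
    using Fcot_pos[OF S, of k] unfolding Fcot_def G_def S_def by simp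
  have "((\<lambda>k. sqrt ((1 + k^2) * ((1 - S * k)^2 + S^2))) has_real_derivative
     inverse (sqrt G) / 2 * ((2 * k * ((1 - S * k)^2 + S^2)) - (1 + k^2) * (2 * (1 - S * k) * S))) (at k)"
    using G unfolding G_def by (auto intro!: derivative_eq_intros simp: algebra_simps)
  moreover have "inverse (sqrt G) / 2 * ((2 * k * ((1 - S * k)^2 + S^2)) - (1 + k^2) * (2 * (1 - S * k) * S))
      = (2*m - 1) * (m^2 - m + S^2) / (S * sqrt G)"
    using G S unfolding m_def S_def[symmetric]
    by (simp add: field_simps power2_eq_square)
  ultimately show ?thesis
    unfolding Fcot_def S_def[symmetric] G_def[symmetric] by simp
qed

lemma Fbeta_has_real_derivative:
  fixes a b :: real
  assumes ab: "0 < a" "a < pi/2" "0 \<le> b" "b \<le> a"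
  defines "m \<equiv> sin (2*a) * cot (a + b)"
  shows "(Fbeta a has_real_derivative
           (2*m - 1) * (m^2 - m + sin (2*a)^2) / (sin (2*a) * Fcot a (cot (a + b)))
           * - inverse (sin (a + b)^2)) (at b)"
proof -
  have pos: "cos a > 0" "cos b > 0" "sin (a + b) > 0"
    using ab by (auto intro: sin_gt_zero cos_gt_zero_pi)
  have S: "sin (2*a) \<noteq> 0"
    using ab sin_gt_zero[of "2*a"] by simp
  have "tan a + tan b \<noteq> 0"
    using pos by (simp add: add_tan_eq)
  moreover have "isCont tan b"
    using pos by (simp add: isCont_tan)
  ultimately have "isCont (\<lambda>x. coefA a x * cos (2*a)) b"
    unfolding coefA_def by (intro isCont_mult isCont_divide isCont_add continuous_const) auto
  then have "\<forall>\<^sub>F x in nhds b. coefA a x * cos (2*a) < 1"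
    using coefA_mult_cos_double_less_1[OF ab] by (rule isCont_eventually_less)
  moreover have "\<forall>\<^sub>F x in nhds b. 0 < cos x" "\<forall>\<^sub>F x in nhds b. 0 < sin (a + x)"
    using pos by (auto intro: isCont_eventually_gt)
  ultimately have ev: "\<forall>\<^sub>F x in nhds b. Fbeta a x = Fcot a (cot (a + x))"
    by eventually_elim (rule Fbeta_eq_Fcot[OF ab(1,2)])
  have "((\<lambda>x. Fcot a (cot (a + x))) has_real_derivative
      (2*m - 1) * (m^2 - m + sin (2*a)^2) / (sin (2*a) * Fcot a (cot (a + b)))
      * - inverse (sin (a + b)^2)) (at b)"
  proof -
    have shift: "((\<lambda>x. a + x) has_real_derivative 1) (at b)"
      by (auto intro!: derivative_eq_intros)
    have "sin (a + b) \<noteq> 0"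
      using pos by simp
    from DERIV_chain2[OF DERIV_chain2[OF Fcot_has_real_derivative[OF S] DERIV_cot[OF this]] shift]
    show ?thesis
      unfolding m_def by (simp only: mult_1_right)
  qed
  then show ?thesis
    by (rule DERIV_cong_ev[OF refl ev refl, THEN iffD2])
qed

lemma deriv_Fbeta_eq_0_iff:
  fixes a b :: real
  assumes ab: "0 < a" "a < pi/2" "0 \<le> b" "b \<le> a"
  shows "deriv (Fbeta a) b = 0 \<longleftrightarrow> sin (2*a) * cot (a + b) = 1/2"
proof -
  define m where "m = sin (2*a) * cot (a + b)"
  have S: "sin (2*a) > 0" using ab by (intro sin_gt_zero) auto
  have "sin (a + b) > 0" using ab by (intro sin_gt_zero) auto
  moreover have "m^2 - m + sin (2*a)^2 > 0"
    using quadratic_pos_between[OF sin_cos_squared_add2[of "2*a"] S] sin_double_cot_bounds[OF ab]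
    unfolding m_def by simp
  moreover have "Fcot a (cot (a + b)) > 0" using S by (simp add: Fcot_pos)
  ultimately show ?thesis
    using DERIV_imp_deriv[OF Fbeta_has_real_derivative[OF ab]] S
    unfolding m_def[symmetric] by auto
qed

lemma cos_double_eq_if_sin_double_cot_eq_half:
  fixes a x :: real
  assumes "sin (a + x) \<noteq> 0" "sin (2*a) * cot (a + x) = 1/2"
  shows "cos (2*x) * (3 - 2 * cos (4*a)) = - 2 * cos (4*a) + cos (6*a) + 2"
proof -
  have c4: "cos (4*a) = 2 * cos (2*a)^2 - 1"
    using cos_double_cos[of "2*a"] by simp
  have c6: "cos (6*a) = 4 * cos (2*a)^3 - 3 * cos (2*a)"
    using cos_treble_cos[of "2*a"] by simp
  have "sin (a + x) = 2 * sin (2*a) * cos (a + x)"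
    using assms by (simp add: cot_def field_simps)
  then show ?thesis
    unfolding c4 c6 cos_double sin_double sin_add cos_add
    using sin_cos_squared_add[of a] sin_cos_squared_add[of x] by algebra
qed

lemma eq_arccos_if_sin_double_cot_eq_half:
  fixes a x :: real
  assumes ax: "0 < a" "a < pi/2" "0 \<le> x" "x \<le> a" and m: "sin (2*a) * cot (a + x) = 1/2"
  shows "x = arccos ((- 2 * cos (4*a) + cos (6*a) + 2) / (3 - 2 * cos (4*a))) / 2"
proof -
  have "sin (a + x) \<noteq> 0" using ax sin_gt_zero[of "a + x"] by simp
  moreover have "3 - 2 * cos (4*a) > 0" using cos_le_one[of "4*a"] by linarith
  ultimately have "cos (2*x) = (- 2 * cos (4*a) + cos (6*a) + 2) / (3 - 2 * cos (4*a))"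
    using cos_double_eq_if_sin_double_cot_eq_half[OF _ m] by (simp add: field_simps)
  moreover have "arccos (cos (2*x)) = 2*x" using ax by (intro arccos_cos) auto
  ultimately show ?thesis by simp
qed

lemma cos_double_between_halves_iff:
  fixes a :: real
  assumes "0 < a" "a < pi/2"
  shows "-1/2 \<le> cos (2*a) \<and> cos (2*a) \<le> 1/2 \<longleftrightarrow> pi/6 \<le> a \<and> a \<le> pi/3"
proof -
  have "cos (2*a) \<le> 1/2 \<longleftrightarrow> cos (2*a) \<le> cos (pi/3)" by (simp add: cos_60)
  also have "\<dots> \<longleftrightarrow> pi/3 \<le> 2*a" using assms by (intro cos_mono_le_eq) auto
  finally have "cos (2*a) \<le> 1/2 \<longleftrightarrow> pi/3 \<le> 2*a" .
  moreover have "-1/2 \<le> cos (2*a) \<longleftrightarrow> cos (2*pi/3) \<le> cos (2*a)" by (simp add: cos_120)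
  moreover have "\<dots> \<longleftrightarrow> 2*a \<le> 2*pi/3" using assms by (intro cos_mono_le_eq) auto
  ultimately show ?thesis by auto
qed

lemma exists_sin_double_cot_eq_half:
  fixes a :: real
  assumes a: "0 < a" "a < pi/2" and C: "-1/2 \<le> cos (2*a)" "cos (2*a) \<le> 1/2"
  shows "\<exists>x. 0 \<le> x \<and> x \<le> a \<and> sin (2*a) * cot (a + x) = 1/2"
proof (rule IVT2')
  have "sin a > 0" "cos a > 0" using a by (auto intro: sin_gt_zero cos_gt_zero)
  then show "sin (2*a) * cot (a + 0) \<ge> 1/2"
    using C by (simp add: cot_def sin_double cos_double_cos power2_eq_square)
  have "sin (2*a) > 0" using a by (intro sin_gt_zero) auto
  then show "sin (2*a) * cot (a + a) \<le> 1/2"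
    using C by (simp add: cot_def flip: mult_2)
  have "sin (a + x) \<noteq> 0" if "x \<in> {0..a}" for x
    using that a sin_gt_zero[of "a + x"] by auto
  then show "continuous_on {0..a} (\<lambda>x. sin (2*a) * cot (a + x))"
    by (intro continuous_intros) auto
qed (use a in simp)

theorem lemma10:
  fixes \<alpha> \<beta> :: real
  assumes "0 < \<alpha>" and "\<alpha> < pi / 2"
    and "0 \<le> \<beta>" and "\<beta> \<le> \<alpha>"
  shows "deriv (Fbeta \<alpha>) \<beta> = 0 \<longleftrightarrow>
           (pi / 6 \<le> \<alpha> \<and> \<alpha> \<le> pi / 3 \<and>
            \<beta> = arccos ((- 2 * cos (4 * \<alpha>) + cos (6 * \<alpha>) + 2) / (3 - 2 * cos (4 * \<alpha>))) / 2)"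
  unfolding deriv_Fbeta_eq_0_iff[OF assms]
proof
  assume crit: "sin (2*\<alpha>) * cot (\<alpha> + \<beta>) = 1/2"
  then have "-1/2 \<le> cos (2*\<alpha>) \<and> cos (2*\<alpha>) \<le> 1/2"
    using sin_double_cot_bounds[OF assms] by linarith
  then show "pi / 6 \<le> \<alpha> \<and> \<alpha> \<le> pi / 3 \<and>
      \<beta> = arccos ((- 2 * cos (4 * \<alpha>) + cos (6 * \<alpha>) + 2) / (3 - 2 * cos (4 * \<alpha>))) / 2"
    using cos_double_between_halves_iff[OF assms(1,2)] eq_arccos_if_sin_double_cot_eq_half[OF assms crit]
    by simp
next
  assume h: "pi / 6 \<le> \<alpha> \<and> \<alpha> \<le> pi / 3 \<and>
      \<beta> = arccos ((- 2 * cos (4 * \<alpha>) + cos (6 * \<alpha>) + 2) / (3 - 2 * cos (4 * \<alpha>))) / 2"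
  obtain x where x: "0 \<le> x" "x \<le> \<alpha>" "sin (2*\<alpha>) * cot (\<alpha> + x) = 1/2"
    using exists_sin_double_cot_eq_half[OF assms(1,2)] cos_double_between_halves_iff[OF assms(1,2)] h
    by auto
  have "x = \<beta>"
    using eq_arccos_if_sin_double_cot_eq_half[OF assms(1,2) x] h by simp
  with x show "sin (2*\<alpha>) * cot (\<alpha> + \<beta>) = 1/2" by simp
qed

end
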